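(* Let $0 \le q < p < 1$ and $s \in [0,1]$, and set $\alpha := p - q$ and $\rho := q/(1-\alpha)$. Consider the minimal random walk model: $\{X_i\}_{i\ge1}$ are $\{0,1\}$-valued with $P(X_1=1) = s$, and for each $n\ge1$, with $U_n$ uniform on $\{1,\dots,n\}$ (independent of everything else), if $X_{U_n}=1$ then $X_{n+1}=1$ with probability $p$ and $0$ otherwise, while if $X_{U_n}=0$ then $X_{n+1}=1$ with probability $q$ and $0$ otherwise. Let $H_n := \sum_{i=1}^n X_i$, and let $E_{p,q,s}$, $V_{p,q,s}$ denote expectation and variance for this model. Let $T_n$ be the random recursive tree on vertices $\{1,\dots,n\}$ (vertex $1$ alone initially; for $i=2,\dots,n$, vertex $i$ is joined to a uniformly chosen vertex among $\{1,\dots,i-1\}$), and perform Bernoulli bond percolation on $T_n$ in which each edge is retained independently with probability $\alpha$ and removed otherwise; denote expectation for this model by $E_\alpha$. Let $\mathcal{C}_{1,n}$ be the cluster containing vertex $1$, and let $\mathcal{C}_{1,n},\mathcal{C}_{2,n},\dots,\mathcal{C}_{n,n}$ be an enumeration of the clusters (setting $\mathcal{C}_{j,n} = \emptyset$ when $j$ exceeds the number of clusters). Then $$E_{p,q,s}[H_n] = \rho n + (s-\rho)\, E_\alpha[\#\mathcal{C}_{1,n}],$$ and $$V_{p,q,s}[H_n] = \rho(1-\rho)\sum_{j=1}^n E_\alpha[(\#\mathcal{C}_{j,n})^2] + (1-2\rho)(s-\rho)\, E_\alpha[(\#\mathcal{C}_{1,n})^2] - (s-\rho)^2\, (E_\a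lpha[\#\mathcal{C}_{1,n}])^2.$$
   Context: $\#\mathcal{C}$ denotes the number of vertices of a cluster $\mathcal{C}$. The enumeration of clusters other than $\mathcal{C}_{1,n}$ is arbitrary (e.g. by smallest vertex label); the formulas only involve $\mathcal{C}_{1,n}$ and sums over all clusters. *)

theory Defs
  imports "HOL-Probability.Probability"
begin

text \<open>Minimal random walk model: the list [X_1, ..., X_n] (0-indexed in the list).\<close>
fun mrw :: "real \<Rightarrow> real \<Rightarrow> real \<Rightarrow> nat \<Rightarrow> bool list pmf" where
  "mrw p q s 0 = return_pmf []"
| "mrw p q s (Suc 0) = map_pmf (\<lambda>b. [b]) (bernoulli_pmf s)"
| "mrw p q s (Suc (Suc m)) =
     do { xs \<leftarrow> mrw p q s (Suc m);
          u \<leftarrow> pmf_of_set {..<Suc m};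
          x \<leftarrow> bernoulli_pmf (if xs ! u then p else q);
          return_pmf (xs @ [x]) }"

definition H :: "bool list \<Rightarrow> real" where
  "H xs = real (count_list xs True)"

text \<open>Entry k of the list describes vertex k+2: (its parent in {1..k+1}, whether the edge
  to the parent is retained).\<close>
fun rrt_perc :: "real \<Rightarrow> nat \<Rightarrow> (nat \<times> bool) list pmf" where
  "rrt_perc a 0 = return_pmf []"
| "rrt_perc a (Suc 0) = return_pmf []"
| "rrt_perc a (Suc (Suc m)) =
     do { t \<leftarrow> rrt_perc a (Suc m);
          par \<leftarrow> pmf_of_set {1..Suc m};
          b \<leftarrow> bernoulli_pmf a;
          return_pmf (t @ [(par, b)]) }"

definition perc_adj :: "(nat \<times> bool) list \<Rightarrow> nat \<Rightarrow> nat \<Rightarrow> bool" where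
  "perc_adj t v w \<longleftrightarrow> (\<exists>k<length t. snd (t ! k) \<and>
      ((v = k + 2 \<and> w = fst (t ! k)) \<or> (w = k + 2 \<and> v = fst (t ! k))))"

definition cluster :: "(nat \<times> bool) list \<Rightarrow> nat \<Rightarrow> nat set" where
  "cluster t v = {w. (perc_adj t)\<^sup>*\<^sup>* v w}"

definition clusters :: "nat \<Rightarrow> (nat \<times> bool) list \<Rightarrow> nat set set" where
  "clusters n t = cluster t ` {1..n}"

end

theory Submission
  imports Defs
begin

(* Since q = \<rho> (1 - \<alpha>), a step of the walk copies X_{U_n} with probability \<alpha> and otherwise
   draws an independent Bernoulli(\<rho>) value. So the walk colours the clusters of the percolated
   random recursive tree: the root cluster gets X_1, every other cluster an independent
   Bernoulli(\<rho>) colour, and H_n is the total size of the clusters coloured 1.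
   Instead of constructing this coupling we compare moments: conditioning on the last step,
   E H_n, E H_n^2, E #C_{1,n}, E (#C_{1,n})^2 and E (\<Sum>_j (#C_{j,n})^2) = E (\<Sum>_v #C(v)) obey
   first-order linear recursions in n with coefficients 1 + k \<alpha> / n, and the claimed closed
   forms are preserved by them. *)

lemma expectation_cong_set_pmf:
  fixes f g :: "'a \<Rightarrow> real"
  assumes "\<And>x. x \<in> set_pmf M \<Longrightarrow> f x = g x"
  shows "measure_pmf.expectation M f = measure_pmf.expectation M g"
  using assms by (intro integral_cong_AE) (auto simp: AE_measure_pmf_iff)

lemma expectation_bind_pmf_finite:
  fixes f :: "'b \<Rightarrow> real"
  assumes "finite (set_pmf M)" "\<And>x. x \<in> set_pmf M \<Longrightarrow> finite (set_pmf (N x))"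
  shows "measure_pmf.expectation (M \<bind> N) f =
           measure_pmf.expectation M (\<lambda>x. measure_pmf.expectation (N x) f)"
  using assms by (simp add: pmf_expectation_bind[of "set_pmf M"] integral_measure_pmf[of "set_pmf M"])

lemma finite_set_pmf_bernoulli: "finite (set_pmf (bernoulli_pmf r))"
  by (rule finite_subset[OF subset_UNIV]) simp

lemma expectation_bind_uniform_bernoulli:
  fixes f :: "'b \<Rightarrow> real"
  assumes "finite (set_pmf M)" "finite A" "A \<noteq> {}" "\<And>x u. 0 \<le> r x u" "\<And>x u. r x u \<le> 1"
  shows "measure_pmf.expectation
           (M \<bind> (\<lambda>x. pmf_of_set A \<bind> (\<lambda>u. bernoulli_pmf (r x u) \<bind> (\<lambda>b. return_pmf (g x u b))))) f =
         measure_pmf.expectation M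
           (\<lambda>x. (\<Sum>u\<in>A. r x u * f (g x u True) + (1 - r x u) * f (g x u False)) / real (card A))"
  using assms
  by (simp add: expectation_bind_pmf_finite pmf_expectation_bind_pmf_of_set
      finite_set_pmf_bernoulli integral_pmf_of_set mult.commute flip: map_pmf_def)

(* The hypothesis says that Y' arises from Y by adding a Bernoulli(\<beta> + \<gamma> Y) increment. *)
lemma expectation_unit_increment_moments:
  fixes Y :: "'a \<Rightarrow> real" and Y' :: "'b \<Rightarrow> real"
  assumes "finite (set_pmf M)"
    and step: "\<And>\<phi>. measure_pmf.expectation M' (\<lambda>x. \<phi> (Y' x)) =
      measure_pmf.expectation M (\<lambda>x. \<phi> (Y x) + (\<beta> + \<gamma> * Y x) * (\<phi> (Y x + 1) - \<phi> (Y x)))"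
  shows "measure_pmf.expectation M' Y' = (1 + \<gamma>) * measure_pmf.expectation M Y + \<beta>"
    and "measure_pmf.expectation M' (\<lambda>x. Y' x ^ 2) =
      (1 + 2 * \<gamma>) * measure_pmf.expectation M (\<lambda>x. Y x ^ 2)
      + (2 * \<beta> + \<gamma>) * measure_pmf.expectation M Y + \<beta>"
proof -
  have "measure_pmf.expectation M' Y' = measure_pmf.expectation M (\<lambda>x. (1 + \<gamma>) * Y x + \<beta>)"
    using step[of "\<lambda>y. y"] by (simp add: algebra_simps)
  then show "measure_pmf.expectation M' Y' = (1 + \<gamma>) * measure_pmf.expectation M Y + \<beta>"
    using assms(1) by (simp add: integral_add integrable_measure_pmf_finite)
  have "measure_pmf.expectation M' (\<lambda>x. Y' x ^ 2) =
    measure_pmf.expectation M (\<lambda>x. (1 + 2 * \<gamma>) * Y x ^ 2 + (2 * \<beta> + \<gamma>) * Y x + \<beta>)"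
    using step[of "\<lambda>y. y ^ 2"] by (simp add: algebra_simps power2_eq_square)
  then show "measure_pmf.expectation M' (\<lambda>x. Y' x ^ 2) =
      (1 + 2 * \<gamma>) * measure_pmf.expectation M (\<lambda>x. Y x ^ 2)
      + (2 * \<beta> + \<gamma>) * measure_pmf.expectation M Y + \<beta>"
    using assms(1) by (simp add: integral_add integrable_measure_pmf_finite)
qed

lemma rtranclp_isolated_source:
  assumes "\<And>x y. R x y \<Longrightarrow> x \<noteq> w \<and> y \<noteq> w" "R\<^sup>*\<^sup>* w z"
  shows "z = w"
  using assms(2) by (induction rule: rtranclp_induct) (use assms(1) in auto)

lemma rtranclp_isolated_target:
  assumes "\<And>x y. R x y \<Longrightarrow> x \<noteq> w \<and> y \<noteq> w" "R\<^sup>*\<^sup>* v w"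
  shows "v = w"
  using assms(2) by (cases rule: rtranclp.cases) (use assms(1) in auto)

lemma rtranclp_add_pendant_edge:
  assumes isolated: "\<And>x y. R x y \<Longrightarrow> x \<noteq> w \<and> y \<noteq> w" and "u \<noteq> w" "v \<noteq> w"
  shows "(\<lambda>x y. R x y \<or> (b \<and> ((x = w \<and> y = u) \<or> (y = w \<and> x = u))))\<^sup>*\<^sup>* v z
     \<longleftrightarrow> R\<^sup>*\<^sup>* v z \<or> (b \<and> z = w \<and> R\<^sup>*\<^sup>* v u)" (is "?R'\<^sup>*\<^sup>* v z \<longleftrightarrow> _")
proof
  assume "?R'\<^sup>*\<^sup>* v z"
  then show "R\<^sup>*\<^sup>* v z \<or> (b \<and> z = w \<and> R\<^sup>*\<^sup>* v u)"
  proof (induction rule: rtranclp_induct)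
    case base
    then show ?case by simp
  next
    case (step y z)
    show ?case
    proof (cases "R y z")
      case True
      with isolated step.IH have "R\<^sup>*\<^sup>* v y" by blast
      with True show ?thesis by (meson rtranclp.rtrancl_into_rtrancl)
    next
      case False
      with step.hyps(2) have "b" and yz: "(y = w \<and> z = u) \<or> (z = w \<and> y = u)" by auto
      show ?thesis
      proof (cases "y = w")
        case True
        with step.IH rtranclp_isolated_target[OF isolated] \<open>v \<noteq> w\<close> have "R\<^sup>*\<^sup>* v u" by blast
        with True yz \<open>u \<noteq> w\<close> show ?thesis by auto
      next
        case False
        with yz step.IH \<open>b\<close> show ?thesis by auto
      qed
    qed
  qed
next
  have R_le: "R\<^sup>*\<^sup>* x y \<Longrightarrow> ?R'\<^sup>*\<^sup>* x y" for x y
    by (rule rtranclp_mono[THEN predicate2D, rotated]) auto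
  assume "R\<^sup>*\<^sup>* v z \<or> (b \<and> z = w \<and> R\<^sup>*\<^sup>* v u)"
  then show "?R'\<^sup>*\<^sup>* v z"
  proof
    assume "b \<and> z = w \<and> R\<^sup>*\<^sup>* v u"
    then show ?thesis
      using R_le by (blast intro: rtranclp.rtrancl_into_rtrancl)
  qed (rule R_le)
qed

lemma sum_card_sq_classes:
  fixes c :: "'a \<Rightarrow> 'a set"
  assumes "finite V" "\<And>v. v \<in> V \<Longrightarrow> v \<in> c v" "\<And>v. v \<in> V \<Longrightarrow> c v \<subseteq> V"
    "\<And>v w. v \<in> V \<Longrightarrow> w \<in> c v \<Longrightarrow> c w = c v"
  shows "(\<Sum>C\<in>c ` V. real (card C) ^ 2) = (\<Sum>v\<in>V. real (card (c v)))"
proof -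
  have "(\<Sum>v\<in>V. real (card (c v))) = (\<Sum>C\<in>c ` V. \<Sum>v\<in>{v \<in> V. c v = C}. real (card (c v)))"
    by (rule sum.image_gen[OF assms(1)])
  also have "\<dots> = (\<Sum>C\<in>c ` V. real (card C) ^ 2)"
  proof (rule sum.cong[OF refl])
    fix C
    assume "C \<in> c ` V"
    then have "{v \<in> V. c v = C} = C"
      using assms(2-4) by blast
    then have "(\<Sum>v\<in>{v \<in> V. c v = C}. real (card (c v))) = (\<Sum>v\<in>C. real (card C))"
      by (metis (mono_tags, lifting) mem_Collect_eq sum.cong)
    then show "(\<Sum>v\<in>{v \<in> V. c v = C}. real (card (c v))) = real (card C) ^ 2"
      by (simp add: power2_eq_square)
  qed
  finally show ?thesis ..
qed

lemma finite_set_pmf_mrw: "finite (set_pmf (mrw p q s n))"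
  by (induction p q s n rule: mrw.induct) (auto simp: finite_set_pmf_bernoulli lessThan_empty_iff)

lemma length_mrw: "xs \<in> set_pmf (mrw p q s n) \<Longrightarrow> length xs = n"
  by (induction p q s n arbitrary: xs rule: mrw.induct) auto

lemma H_snoc: "H (xs @ [b]) = H xs + (if b then 1 else 0)"
  by (simp add: H_def)

lemma sum_nth_if_eq_H: "(\<Sum>u<length xs. if xs ! u then a else b) = b * real (length xs) + (a - b) * H xs"
  by (induction xs rule: rev_induct) (simp_all add: H_def nth_append algebra_simps)

lemma expectation_mrw_Suc:
  fixes \<phi> :: "real \<Rightarrow> real"
  assumes "0 \<le> p" "p \<le> 1" "0 \<le> q" "q \<le> 1"
  shows "measure_pmf.expectation (mrw p q s (Suc (Suc m))) (\<lambda>xs. \<phi> (H xs)) =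
         measure_pmf.expectation (mrw p q s (Suc m))
           (\<lambda>xs. \<phi> (H xs) + (q + (p - q) / real (Suc m) * H xs) * (\<phi> (H xs + 1) - \<phi> (H xs)))"
    (is "_ = ?rhs")
proof -
  have avg: "(\<Sum>u<Suc m. (if xs ! u then p else q) * \<phi> (H (xs @ [True]))
                + (1 - (if xs ! u then p else q)) * \<phi> (H (xs @ [False]))) / real (Suc m)
           = \<phi> (H xs) + (q + (p - q) / real (Suc m) * H xs) * (\<phi> (H xs + 1) - \<phi> (H xs))"
    if "length xs = Suc m" for xs
  proof -
    have "(\<Sum>u<Suc m. (if xs ! u then p else q) * \<phi> (H (xs @ [True]))
                + (1 - (if xs ! u then p else q)) * \<phi> (H (xs @ [False])))
        = (\<Sum>u<Suc m. \<phi> (H xs) + (if xs ! u then p else q) * (\<phi> (H xs + 1) - \<phi> (H xs)))"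
      by (intro sum.cong) (auto simp: H_snoc algebra_simps)
    also have "\<dots> = real (Suc m) * \<phi> (H xs) + (q * real (Suc m) + (p - q) * H xs) * (\<phi> (H xs + 1) - \<phi> (H xs))"
      using sum_nth_if_eq_H[of xs p q] that
      by (simp add: sum.distrib del: sum.lessThan_Suc flip: sum_distrib_right)
    finally show ?thesis
      by (simp add: field_simps del: of_nat_Suc)
  qed
  have "measure_pmf.expectation (mrw p q s (Suc (Suc m))) (\<lambda>xs. \<phi> (H xs)) =
        measure_pmf.expectation (mrw p q s (Suc m))
          (\<lambda>xs. (\<Sum>u<Suc m. (if xs ! u then p else q) * \<phi> (H (xs @ [True]))
                + (1 - (if xs ! u then p else q)) * \<phi> (H (xs @ [False]))) / real (Suc m))"
    unfolding mrw.simps(3) using assms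
    by (subst expectation_bind_uniform_bernoulli) (auto simp: finite_set_pmf_mrw)
  also have "\<dots> = ?rhs"
    by (intro expectation_cong_set_pmf avg length_mrw)
  finally show ?thesis .
qed

lemma expectation_mrw_Suc_moments:
  assumes "0 \<le> p" "p \<le> 1" "0 \<le> q" "q \<le> 1"
  shows "measure_pmf.expectation (mrw p q s (Suc (Suc m))) H =
      (1 + (p - q) / real (Suc m)) * measure_pmf.expectation (mrw p q s (Suc m)) H + q"
    and "measure_pmf.expectation (mrw p q s (Suc (Suc m))) (\<lambda>xs. H xs ^ 2) =
      (1 + 2 * ((p - q) / real (Suc m))) * measure_pmf.expectation (mrw p q s (Suc m)) (\<lambda>xs. H xs ^ 2)
      + (2 * q + (p - q) / real (Suc m)) * measure_pmf.expectation (mrw p q s (Suc m)) H + q"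
  by (rule expectation_unit_increment_moments[OF finite_set_pmf_mrw expectation_mrw_Suc[OF assms]])+

definition valid_tree :: "(nat \<times> bool) list \<Rightarrow> bool" where
  "valid_tree t \<longleftrightarrow> (\<forall>k<length t. fst (t ! k) \<in> {1..k + 1})"

lemma set_pmf_rrt_perc:
  "t \<in> set_pmf (rrt_perc a (Suc m)) \<Longrightarrow> length t = m \<and> valid_tree t"
proof (induction m arbitrary: t)
  case 0
  then show ?case by (simp add: valid_tree_def)
next
  case (Suc m)
  then obtain t0 u b where "t = t0 @ [(u, b)]" "t0 \<in> set_pmf (rrt_perc a (Suc m))" "u \<in> {1..Suc m}"
    by auto
  with Suc.IH show ?case by (auto simp: valid_tree_def nth_append less_Suc_eq)
qed

lemma finite_set_pmf_rrt_perc: "finite (set_pmf (rrt_perc a n))"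
  by (induction a n rule: rrt_perc.induct) (auto simp: finite_set_pmf_bernoulli)

lemma expectation_rrt_perc_Suc:
  fixes f :: "(nat \<times> bool) list \<Rightarrow> real"
  assumes "0 \<le> a" "a \<le> 1"
  shows "measure_pmf.expectation (rrt_perc a (Suc (Suc m))) f =
    measure_pmf.expectation (rrt_perc a (Suc m))
      (\<lambda>t. (\<Sum>u\<in>{1..Suc m}. a * f (t @ [(u, True)]) + (1 - a) * f (t @ [(u, False)])) / real (Suc m))"
  unfolding rrt_perc.simps(3) using assms
  by (subst expectation_bind_uniform_bernoulli) (auto simp: finite_set_pmf_rrt_perc)

lemma perc_adj_snoc:
  "perc_adj (t @ [(u, b)]) x y \<longleftrightarrow>
     perc_adj t x y \<or> (b \<and> ((x = length t + 2 \<and> y = u) \<or> (y = length t + 2 \<and> x = u)))"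
  unfolding perc_adj_def less_Suc_eq length_append_singleton ex_disj_distrib conj_disj_distribR
  by (simp add: nth_append cong: conj_cong)

lemma perc_adj_vertices:
  assumes "valid_tree t" "perc_adj t x y"
  shows "x \<in> {1..length t + 1} \<and> y \<in> {1..length t + 1}"
proof -
  obtain k where "k < length t" "(x = k + 2 \<and> y = fst (t ! k)) \<or> (y = k + 2 \<and> x = fst (t ! k))"
    using assms(2) unfolding perc_adj_def by blast
  with assms(1) show ?thesis
    unfolding valid_tree_def by auto
qed

lemma new_vertex_not_perc_adj:
  "valid_tree t \<Longrightarrow> perc_adj t x y \<Longrightarrow> x \<noteq> length t + 2 \<and> y \<noteq> length t + 2"
  using perc_adj_vertices by fastforce

lemma mem_cluster_self: "v \<in> cluster t v"
  by (simp add: cluster_def)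

lemma cluster_Nil: "cluster [] v = {v}"
proof -
  have "(perc_adj [])\<^sup>*\<^sup>* v w \<Longrightarrow> w = v" for w
    by (rule rtranclp_isolated_source) (auto simp: perc_adj_def)
  then show ?thesis
    unfolding cluster_def by auto
qed

lemma cluster_eq_if_mem: "w \<in> cluster t v \<Longrightarrow> cluster t w = cluster t v"
proof -
  have "symp (perc_adj t)"
    unfolding perc_adj_def symp_def by blast
  moreover assume "w \<in> cluster t v"
  ultimately show ?thesis
    unfolding cluster_def
    by (auto intro: rtranclp_trans dest: symp_rtranclp[THEN sympD])
qed

lemma mem_cluster_commute: "u \<in> cluster t v \<longleftrightarrow> v \<in> cluster t u"
  using cluster_eq_if_mem mem_cluster_self by metis

lemma cluster_subset:
  assumes "valid_tree t" "v \<in> {1..length t + 1}"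
  shows "cluster t v \<subseteq> {1..length t + 1}"
proof
  fix z
  assume "z \<in> cluster t v"
  then have "(perc_adj t)\<^sup>*\<^sup>* v z" by (simp add: cluster_def)
  then show "z \<in> {1..length t + 1}"
    by (induction rule: rtranclp_induct) (use assms perc_adj_vertices in auto)
qed

lemma finite_cluster:
  "valid_tree t \<Longrightarrow> v \<in> {1..length t + 1} \<Longrightarrow> finite (cluster t v)"
  using cluster_subset finite_subset by blast

lemma cluster_snoc:
  assumes "valid_tree t" "u \<in> {1..length t + 1}" "v \<in> {1..length t + 1}"
  shows "cluster (t @ [(u, b)]) v =
    cluster t v \<union> (if b \<and> u \<in> cluster t v then {length t + 2} else {})"
proof (rule set_eqI)
  fix z
  have adj: "perc_adj (t @ [(u, b)]) =
    (\<lambda>x y. perc_adj t x y \<or> (b \<and> ((x = length t + 2 \<and> y = u) \<or> (y = length t + 2 \<and> x = u))))"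
    by (intro ext) (simp add: perc_adj_snoc)
  have "u \<noteq> length t + 2" "v \<noteq> length t + 2"
    using assms(2,3) by auto
  then show "z \<in> cluster (t @ [(u, b)]) v \<longleftrightarrow>
      z \<in> cluster t v \<union> (if b \<and> u \<in> cluster t v then {length t + 2} else {})"
    unfolding cluster_def adj mem_Collect_eq
    using rtranclp_add_pendant_edge[of "perc_adj t" "length t + 2" u v b z, OF new_vertex_not_perc_adj[OF assms(1)]] by auto
qed

lemma cluster_snoc_new:
  assumes "valid_tree t" "u \<in> {1..length t + 1}"
  shows "cluster (t @ [(u, b)]) (length t + 2) =
    (if b then insert (length t + 2) (cluster t u) else {length t + 2})"
proof (cases b)
  case True
  have "cluster (t @ [(u, b)]) u = insert (length t + 2) (cluster t u)"
    using True by (simp add: cluster_snoc[OF assms assms(2)] mem_cluster_self)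
  moreover from this have "cluster (t @ [(u, b)]) (length t + 2) = cluster (t @ [(u, b)]) u"
    by (intro cluster_eq_if_mem) simp
  ultimately show ?thesis
    using True by simp
next
  case False
  then have adj: "perc_adj (t @ [(u, b)]) = perc_adj t"
    by (intro ext) (simp add: perc_adj_snoc)
  have "cluster (t @ [(u, b)]) (length t + 2) = {length t + 2}"
    unfolding cluster_def adj using rtranclp_isolated_source[OF new_vertex_not_perc_adj[OF assms(1)]] by blast
  with False show ?thesis
    by simp
qed

lemma card_cluster_snoc:
  assumes "valid_tree t" "u \<in> {1..length t + 1}" "v \<in> {1..length t + 1}"
  shows "card (cluster (t @ [(u, b)]) v) = card (cluster t v) + of_bool (b \<and> u \<in> cluster t v)"
proof -
  have "length t + 2 \<notin> cluster t v"
    using cluster_subset[OF assms(1,3)] by auto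
  then show ?thesis
    using cluster_snoc[OF assms] finite_cluster[OF assms(1,3)] by auto
qed

lemma card_cluster_snoc_new:
  assumes "valid_tree t" "u \<in> {1..length t + 1}"
  shows "card (cluster (t @ [(u, b)]) (length t + 2)) = (if b then card (cluster t u) + 1 else 1)"
proof -
  have "length t + 2 \<notin> cluster t u"
    using cluster_subset[OF assms] by auto
  then show ?thesis
    using cluster_snoc_new[OF assms] finite_cluster[OF assms] by auto
qed

lemma sum_of_bool_mem_cluster:
  assumes "valid_tree t" "v \<in> {1..length t + 1}"
  shows "(\<Sum>u\<in>{1..length t + 1}. of_bool (u \<in> cluster t v)) = real (card (cluster t v))"
  using cluster_subset[OF assms]
  by (subst sum_of_bool_eq) (simp_all only: finite_atLeastAtMost Collect_mem_eq Int_absorb1)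

abbreviation root_cluster_size :: "(nat \<times> bool) list \<Rightarrow> real" where
  "root_cluster_size t \<equiv> real (card (cluster t 1))"

lemma expectation_rrt_perc_Suc_root_cluster:
  fixes \<phi> :: "real \<Rightarrow> real"
  assumes "0 \<le> a" "a \<le> 1"
  shows "measure_pmf.expectation (rrt_perc a (Suc (Suc m))) (\<lambda>t. \<phi> (root_cluster_size t)) =
         measure_pmf.expectation (rrt_perc a (Suc m)) (\<lambda>t. \<phi> (root_cluster_size t)
           + a / real (Suc m) * root_cluster_size t * (\<phi> (root_cluster_size t + 1) - \<phi> (root_cluster_size t)))"
    (is "_ = ?rhs")
proof -
  have avg: "(\<Sum>u\<in>{1..Suc m}. a * \<phi> (root_cluster_size (t @ [(u, True)]))
                + (1 - a) * \<phi> (root_cluster_size (t @ [(u, False)]))) / real (Suc m)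
           = \<phi> (root_cluster_size t)
             + a / real (Suc m) * root_cluster_size t * (\<phi> (root_cluster_size t + 1) - \<phi> (root_cluster_size t))"
    if "t \<in> set_pmf (rrt_perc a (Suc m))" for t
  proof -
    have t: "length t = m" "valid_tree t"
      using set_pmf_rrt_perc[OF that] by auto
    have root: "1 \<in> {1..length t + 1}"
      by simp
    have "(\<Sum>u\<in>{1..Suc m}. a * \<phi> (root_cluster_size (t @ [(u, True)]))
                + (1 - a) * \<phi> (root_cluster_size (t @ [(u, False)])))
        = (\<Sum>u\<in>{1..Suc m}. \<phi> (root_cluster_size t)
                + a * of_bool (u \<in> cluster t 1) * (\<phi> (root_cluster_size t + 1) - \<phi> (root_cluster_size t)))"
      using t by (intro sum.cong refl) (auto simp: card_cluster_snoc algebra_simps)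
    also have "\<dots> = real (Suc m) * \<phi> (root_cluster_size t)
        + a * root_cluster_size t * (\<phi> (root_cluster_size t + 1) - \<phi> (root_cluster_size t))"
      using sum_of_bool_mem_cluster[OF t(2) root] t(1)
      by (simp add: sum.distrib flip: sum_distrib_left sum_distrib_right)
    finally show ?thesis
      by (simp add: field_simps)
  qed
  have "measure_pmf.expectation (rrt_perc a (Suc (Suc m))) (\<lambda>t. \<phi> (root_cluster_size t)) =
        measure_pmf.expectation (rrt_perc a (Suc m))
          (\<lambda>t. (\<Sum>u\<in>{1..Suc m}. a * \<phi> (root_cluster_size (t @ [(u, True)]))
                + (1 - a) * \<phi> (root_cluster_size (t @ [(u, False)]))) / real (Suc m))"
    by (rule expectation_rrt_perc_Suc[OF assms])
  also have "\<dots> = ?rhs"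
    by (intro expectation_cong_set_pmf avg)
  finally show ?thesis .
qed

lemma expectation_rrt_perc_Suc_root_cluster_moments:
  assumes "0 \<le> a" "a \<le> 1"
  shows "measure_pmf.expectation (rrt_perc a (Suc (Suc m))) root_cluster_size =
      (1 + a / real (Suc m)) * measure_pmf.expectation (rrt_perc a (Suc m)) root_cluster_size"
    and "measure_pmf.expectation (rrt_perc a (Suc (Suc m))) (\<lambda>t. root_cluster_size t ^ 2) =
      (1 + 2 * (a / real (Suc m))) * measure_pmf.expectation (rrt_perc a (Suc m)) (\<lambda>t. root_cluster_size t ^ 2)
      + a / real (Suc m) * measure_pmf.expectation (rrt_perc a (Suc m)) root_cluster_size"
proof -
  have "measure_pmf.expectation (rrt_perc a (Suc (Suc m))) (\<lambda>t. \<phi> (root_cluster_size t)) =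
      measure_pmf.expectation (rrt_perc a (Suc m)) (\<lambda>t. \<phi> (root_cluster_size t)
        + (0 + a / real (Suc m) * root_cluster_size t) * (\<phi> (root_cluster_size t + 1) - \<phi> (root_cluster_size t)))"
    for \<phi>
    by (simp only: add_0_left expectation_rrt_perc_Suc_root_cluster[OF assms])
  note moments = expectation_unit_increment_moments[OF finite_set_pmf_rrt_perc this]
  show "measure_pmf.expectation (rrt_perc a (Suc (Suc m))) root_cluster_size =
      (1 + a / real (Suc m)) * measure_pmf.expectation (rrt_perc a (Suc m)) root_cluster_size"
    using moments(1) by (simp only: add_0_right)
  show "measure_pmf.expectation (rrt_perc a (Suc (Suc m))) (\<lambda>t. root_cluster_size t ^ 2) =
      (1 + 2 * (a / real (Suc m))) * measure_pmf.expectation (rrt_perc a (Suc m)) (\<lambda>t. root_cluster_size t ^ 2)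
      + a / real (Suc m) * measure_pmf.expectation (rrt_perc a (Suc m)) root_cluster_size"
    using moments(2) by (simp only: add_0_right mult_zero_right add_0_left)
qed

lemma sum_card_cluster_snoc:
  assumes "valid_tree t" "u \<in> {1..length t + 1}"
  shows "(\<Sum>v\<in>{1..length t + 2}. real (card (cluster (t @ [(u, b)]) v))) =
    (\<Sum>v\<in>{1..length t + 1}. real (card (cluster t v))) + 1 + of_bool b * 2 * real (card (cluster t u))"
proof -
  have "{1..length t + 2} = insert (length t + 2) {1..length t + 1}"
    by auto
  then have "(\<Sum>v\<in>{1..length t + 2}. real (card (cluster (t @ [(u, b)]) v))) =
      real (card (cluster (t @ [(u, b)]) (length t + 2)))
      + (\<Sum>v\<in>{1..length t + 1}. real (card (cluster (t @ [(u, b)]) v)))"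
    by simp
  also have "(\<Sum>v\<in>{1..length t + 1}. real (card (cluster (t @ [(u, b)]) v))) =
      (\<Sum>v\<in>{1..length t + 1}. real (card (cluster t v)) + of_bool b * of_bool (v \<in> cluster t u))"
    using assms by (intro sum.cong refl) (simp add: card_cluster_snoc mem_cluster_commute[of u])
  also have "\<dots> = (\<Sum>v\<in>{1..length t + 1}. real (card (cluster t v))) + of_bool b * real (card (cluster t u))"
    by (simp only: sum.distrib sum_of_bool_mem_cluster[OF assms] flip: sum_distrib_left)
  also have "real (card (cluster (t @ [(u, b)]) (length t + 2))) = (if b then real (card (cluster t u)) + 1 else 1)"
    by (simp only: card_cluster_snoc_new[OF assms]) simp
  finally show ?thesis
    by (cases b) simp_all
qed

lemma expectation_rrt_perc_Suc_cluster_sizes: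
  assumes "0 \<le> a" "a \<le> 1"
  shows "measure_pmf.expectation (rrt_perc a (Suc (Suc m)))
           (\<lambda>t. \<Sum>v\<in>{1..Suc (Suc m)}. real (card (cluster t v))) =
         (1 + 2 * a / real (Suc m)) *
           measure_pmf.expectation (rrt_perc a (Suc m)) (\<lambda>t. \<Sum>v\<in>{1..Suc m}. real (card (cluster t v))) + 1"
proof -
  have avg: "(\<Sum>u\<in>{1..Suc m}. a * (\<Sum>v\<in>{1..Suc (Suc m)}. real (card (cluster (t @ [(u, True)]) v)))
                + (1 - a) * (\<Sum>v\<in>{1..Suc (Suc m)}. real (card (cluster (t @ [(u, False)]) v)))) / real (Suc m)
           = (1 + 2 * a / real (Suc m)) * (\<Sum>v\<in>{1..Suc m}. real (card (cluster t v))) + 1"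
    if "t \<in> set_pmf (rrt_perc a (Suc m))" for t
  proof -
    have t: "length t = m" "valid_tree t"
      using set_pmf_rrt_perc[OF that] by auto
    define S where "S = (\<Sum>v\<in>{1..Suc m}. real (card (cluster t v)))"
    have "(\<Sum>u\<in>{1..Suc m}. a * (\<Sum>v\<in>{1..Suc (Suc m)}. real (card (cluster (t @ [(u, True)]) v)))
                + (1 - a) * (\<Sum>v\<in>{1..Suc (Suc m)}. real (card (cluster (t @ [(u, False)]) v))))
        = (\<Sum>u\<in>{1..Suc m}. S + 1 + 2 * a * real (card (cluster t u)))"
      using t sum_card_cluster_snoc[OF t(2)] by (intro sum.cong refl) (simp add: S_def algebra_simps)
    also have "\<dots> = real (Suc m) * (S + 1) + 2 * a * S"
      by (simp add: sum.distrib S_def flip: sum_distrib_left)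
    finally show ?thesis
      by (simp add: field_simps S_def)
  qed
  show ?thesis
    by (simp only: expectation_rrt_perc_Suc[OF assms] expectation_cong_set_pmf[OF avg])
      (simp add: integral_add integrable_measure_pmf_finite finite_set_pmf_rrt_perc del: rrt_perc.simps)
qed

lemma expectation_rrt_perc_Suc_clusters:
  assumes "0 \<le> a" "a \<le> 1"
  shows "measure_pmf.expectation (rrt_perc a (Suc (Suc m)))
           (\<lambda>t. \<Sum>C\<in>clusters (Suc (Suc m)) t. real (card C) ^ 2) =
         (1 + 2 * a / real (Suc m)) *
           measure_pmf.expectation (rrt_perc a (Suc m)) (\<lambda>t. \<Sum>C\<in>clusters (Suc m) t. real (card C) ^ 2) + 1"
proof -
  have "measure_pmf.expectation (rrt_perc a (Suc k)) (\<lambda>t. \<Sum>C\<in>clusters (Suc k) t. real (card C) ^ 2) =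
        measure_pmf.expectation (rrt_perc a (Suc k)) (\<lambda>t. \<Sum>v\<in>{1..Suc k}. real (card (cluster t v)))" for k
  proof (rule expectation_cong_set_pmf)
    fix t
    assume "t \<in> set_pmf (rrt_perc a (Suc k))"
    then have "{1..Suc k} = {1..length t + 1}" "valid_tree t"
      using set_pmf_rrt_perc by auto
    then show "(\<Sum>C\<in>clusters (Suc k) t. real (card C) ^ 2) = (\<Sum>v\<in>{1..Suc k}. real (card (cluster t v)))"
      unfolding clusters_def
      using mem_cluster_self cluster_subset cluster_eq_if_mem by (intro sum_card_sq_classes) auto
  qed
  then show ?thesis
    by (simp only: expectation_rrt_perc_Suc_cluster_sizes[OF assms])
qed

lemma expectation_mrw_H:
  assumes "0 \<le> q" "q < p" "p < 1" "0 \<le> s" "s \<le> 1"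
  defines "\<alpha> \<equiv> p - q"
  defines "\<rho> \<equiv> q / (1 - \<alpha>)"
  shows "measure_pmf.expectation (mrw p q s (Suc m)) H =
    \<rho> * real (Suc m) + (s - \<rho>) * measure_pmf.expectation (rrt_perc \<alpha> (Suc m)) root_cluster_size"
proof (induction m)
  case 0
  show ?case
    using assms(4,5) by (simp add: H_def cluster_Nil)
next
  case (Suc m)
  have pq: "0 \<le> p" "p \<le> 1" "0 \<le> q" "q \<le> 1" and "0 \<le> \<alpha>" "\<alpha> \<le> 1" and q: "q = \<rho> * (1 - \<alpha>)"
    using assms(1-3) by (auto simp: \<alpha>_def \<rho>_def)
  show ?case
    unfolding expectation_mrw_Suc_moments(1)[OF pq, folded \<alpha>_def] Suc.IH
      expectation_rrt_perc_Suc_root_cluster_moments(1)[OF \<open>0 \<le> \<alpha>\<close> \<open>\<alpha> \<le> 1\<close>]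
    by (simp add: field_simps q)
qed

lemma expectation_mrw_H_sq:
  assumes "0 \<le> q" "q < p" "p < 1" "0 \<le> s" "s \<le> 1"
  defines "\<alpha> \<equiv> p - q"
  defines "\<rho> \<equiv> q / (1 - \<alpha>)"
  shows "measure_pmf.expectation (mrw p q s (Suc m)) (\<lambda>xs. H xs ^ 2) =
    \<rho> * (1 - \<rho>) *
      measure_pmf.expectation (rrt_perc \<alpha> (Suc m)) (\<lambda>t. \<Sum>C\<in>clusters (Suc m) t. real (card C) ^ 2)
    + (1 - 2 * \<rho>) * (s - \<rho>) *
      measure_pmf.expectation (rrt_perc \<alpha> (Suc m)) (\<lambda>t. root_cluster_size t ^ 2)
    + \<rho>\<^sup>2 * real (Suc m) ^ 2
    + 2 * \<rho> * (s - \<rho>) * real (Suc m) * measure_pmf.expectation (rrt_perc \<alpha> (Suc m)) root_cluster_size"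
proof (induction m)
  case 0
  show ?case
    using assms(4,5) by (simp add: H_def clusters_def cluster_Nil algebra_simps power2_eq_square)
next
  case (Suc m)
  have pq: "0 \<le> p" "p \<le> 1" "0 \<le> q" "q \<le> 1" and "0 \<le> \<alpha>" "\<alpha> \<le> 1" and q: "q = \<rho> * (1 - \<alpha>)"
    using assms(1-3) by (auto simp: \<alpha>_def \<rho>_def)
  define e where "e = measure_pmf.expectation (rrt_perc \<alpha> (Suc m)) root_cluster_size"
  define f where "f = measure_pmf.expectation (rrt_perc \<alpha> (Suc m)) (\<lambda>t. root_cluster_size t ^ 2)"
  define g where
    "g = measure_pmf.expectation (rrt_perc \<alpha> (Suc m)) (\<lambda>t. \<Sum>C\<in>clusters (Suc m) t. real (card C) ^ 2)"
  define N where "N = real (Suc m)"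
  have EH: "measure_pmf.expectation (mrw p q s (Suc m)) H = \<rho> * N + (s - \<rho>) * e"
    unfolding e_def N_def \<rho>_def \<alpha>_def by (rule expectation_mrw_H[OF assms(1-5)])
  have "N > 0" "real (Suc (Suc m)) = N + 1"
    by (simp_all add: N_def)
  then show ?case
    unfolding expectation_mrw_Suc_moments(2)[OF pq, folded \<alpha>_def] Suc.IH
      expectation_rrt_perc_Suc_root_cluster_moments[OF \<open>0 \<le> \<alpha>\<close> \<open>\<alpha> \<le> 1\<close>]
      expectation_rrt_perc_Suc_clusters[OF \<open>0 \<le> \<alpha>\<close> \<open>\<alpha> \<le> 1\<close>]
    unfolding e_def[symmetric] f_def[symmetric] g_def[symmetric] N_def[symmetric] EH
    by (simp add: field_simps power2_eq_square q)
qed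

theorem theoremA3:
  fixes p q s :: real and n :: nat
  assumes "0 \<le> q" "q < p" "p < 1" "0 \<le> s" "s \<le> 1" "1 \<le> n"
  defines "\<alpha> \<equiv> p - q"
  defines "\<rho> \<equiv> q / (1 - \<alpha>)"
  shows "measure_pmf.expectation (mrw p q s n) H =
           \<rho> * real n + (s - \<rho>) *
             measure_pmf.expectation (rrt_perc \<alpha> n) (\<lambda>t. real (card (cluster t 1)))
       \<and> measure_pmf.variance (mrw p q s n) H =
           \<rho> * (1 - \<rho>) *
             measure_pmf.expectation (rrt_perc \<alpha> n)
               (\<lambda>t. \<Sum>C\<in>clusters n t. real (card C) ^ 2)
         + (1 - 2 * \<rho>) * (s - \<rho>) *
             measure_pmf.expectation (rrt_perc \<alpha> n) (\<lambda>t. real (card (cluster t 1)) ^ 2)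
         - (s - \<rho>) ^ 2 *
             (measure_pmf.expectation (rrt_perc \<alpha> n) (\<lambda>t. real (card (cluster t 1)))) ^ 2"
proof -
  obtain m where n: "n = Suc m"
    using \<open>1 \<le> n\<close> by (cases n) auto
  have EH: "measure_pmf.expectation (mrw p q s n) H =
      \<rho> * real n + (s - \<rho>) * measure_pmf.expectation (rrt_perc \<alpha> n) root_cluster_size"
    unfolding n \<alpha>_def \<rho>_def by (rule expectation_mrw_H[OF assms(1-5)])
  have EH2: "measure_pmf.expectation (mrw p q s n) (\<lambda>xs. H xs ^ 2) =
      \<rho> * (1 - \<rho>) * measure_pmf.expectation (rrt_perc \<alpha> n) (\<lambda>t. \<Sum>C\<in>clusters n t. real (card C) ^ 2)
      + (1 - 2 * \<rho>) * (s - \<rho>) * measure_pmf.expectation (rrt_perc \<alpha> n) (\<lambda>t. root_cluster_size t ^ 2)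
      + \<rho>\<^sup>2 * real n ^ 2 + 2 * \<rho> * (s - \<rho>) * real n * measure_pmf.expectation (rrt_perc \<alpha> n) root_cluster_size"
    unfolding n \<alpha>_def \<rho>_def by (rule expectation_mrw_H_sq[OF assms(1-5)])
  have "measure_pmf.variance (mrw p q s n) H =
      measure_pmf.expectation (mrw p q s n) (\<lambda>xs. H xs ^ 2) - (measure_pmf.expectation (mrw p q s n) H)\<^sup>2"
    by (rule measure_pmf.variance_eq) (simp_all add: integrable_measure_pmf_finite finite_set_pmf_mrw)
  then show ?thesis
    unfolding EH2 EH by (simp add: algebra_simps power2_eq_square)
qed

end
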